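(* Let $1\le k\le N$ and let $\mathscr{K}$ be a collection of compact subsets of $\mathbb{C}^N$ totally ordered by inclusion, and let $K_\infty=\bigcap_{K\in\mathscr{K}}K$. Then $\widehat{K_\infty}^{\,k}=\bigcap_{K\in\mathscr{K}}\widehat{K}^{\,k}$ and $h_r^k(K_\infty)=\bigcap_{K\in\mathscr{K}}h_r^k(K)$.
   Context: Let $X\subset\mathbb{C}^N$ be compact. An analytic subvariety of $\mathbb{C}^N$ of pure codimension $m$ means a pure-dimensional analytic subvariety of $\mathbb{C}^N$ of dimension $N-m$. The polynomial hull is $\widehat{X}=\{z: |p(z)|\le\max_X|p| \text{ for all polynomials } p\}$. For $1\le k\le N$, the $k$-rational hull $h_r^k(X)$ is the set of $z\in\mathbb{C}^N$ such that every analytic subvariety of $\mathbb{C}^N$ of pure codimension $\le k$ that passes through $z$ intersects $X$. The $1$-polynomial hull is $\widehat{X}^{\,1}=\widehat{X}$; for $2\le k\le N$ the $k$-polynomial hull $\widehat{X}^{\,k}$ is the set of $z\in\mathbb{C}^N$ such that $z\in h_r^{k-1}(X)$ and $z\in\widehat{X\cap V}$ for every analytic subvariety $V$ of $\mathbb{C}^N$ of pure codimension $\le k-1$ passing through $z$. *)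

theory Defs
  imports "HOL-Analysis.Analysis"
begin

text \<open>Points of C^N are modelled as complex ^ 'n with N = CARD('n).\<close>

inductive_set poly_fun :: "(complex ^ 'n \<Rightarrow> complex) set" where
  pf_const: "(\<lambda>z. c) \<in> poly_fun"
| pf_coord: "(\<lambda>z. z $ i) \<in> poly_fun"
| pf_add: "p \<in> poly_fun \<Longrightarrow> q \<in> poly_fun \<Longrightarrow> (\<lambda>z. p z + q z) \<in> poly_fun"
| pf_mult: "p \<in> poly_fun \<Longrightarrow> q \<in> poly_fun \<Longrightarrow> (\<lambda>z. p z * q z) \<in> poly_fun"

definition complex_linear_fun :: "(complex ^ 'n \<Rightarrow> complex) \<Rightarrow> bool" where
  "complex_linear_fun L \<longleftrightarrow> linear L \<and> (\<forall>c v. L (c *s v) = c * L v)"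

definition holo_on :: "(complex ^ 'n) set \<Rightarrow> (complex ^ 'n \<Rightarrow> complex) \<Rightarrow> bool" where
  "holo_on U f \<longleftrightarrow> open U \<and>
     (\<forall>z\<in>U. \<exists>L. (f has_derivative L) (at z) \<and> complex_linear_fun L)"

definition analytic_subvariety :: "(complex ^ 'n) set \<Rightarrow> bool" where
  "analytic_subvariety V \<longleftrightarrow> closed V \<and>
     (\<forall>p\<in>V. \<exists>U F. open U \<and> p \<in> U \<and> finite F \<and> (\<forall>f\<in>F. holo_on U f) \<and>
        V \<inter> U = {z\<in>U. \<forall>f\<in>F. f z = 0})"

definition regular_point :: "(complex ^ 'n) set \<Rightarrow> nat \<Rightarrow> complex ^ 'n \<Rightarrow> bool" where
  "regular_point V m p \<longleftrightarrow> p \<in> V \<and>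
     (\<exists>U fs. open U \<and> p \<in> U \<and> (\<forall>i<m. holo_on U (fs i)) \<and>
        V \<inter> U = {z\<in>U. \<forall>i<m. fs i z = 0} \<and>
        (\<forall>z\<in>U. \<exists>Ls. (\<forall>i<m. (fs i has_derivative Ls i) (at z) \<and> complex_linear_fun (Ls i)) \<and>
            (\<forall>c::nat \<Rightarrow> complex. (\<forall>v. (\<Sum>i<m. c i * Ls i v) = 0) \<longrightarrow> (\<forall>i<m. c i = 0))))"

text \<open>Analytic subvariety of pure codimension m (pure dimension N - m): every regular point
  has codimension m and the regular points are dense in V.\<close>
definition pure_codim_subvariety :: "(complex ^ 'n) set \<Rightarrow> nat \<Rightarrow> bool" where
  "pure_codim_subvariety V m \<longleftrightarrow> analytic_subvariety V \<and>
     V \<subseteq> closure {p. regular_point V m p} \<and>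
     (\<forall>m' p. regular_point V m' p \<longrightarrow> m' = m)"

text \<open>Polynomial hull; max over X written as a supremum in the extended reals.\<close>
definition poly_hull :: "(complex ^ 'n) set \<Rightarrow> (complex ^ 'n) set" where
  "poly_hull X = {z. \<forall>p\<in>poly_fun. ereal (cmod (p z)) \<le> (SUP x\<in>X. ereal (cmod (p x)))}"

definition rat_hull :: "nat \<Rightarrow> (complex ^ 'n) set \<Rightarrow> (complex ^ 'n) set" where
  "rat_hull k X = {z. \<forall>V m. m \<le> k \<and> pure_codim_subvariety V m \<and> z \<in> V \<longrightarrow> V \<inter> X \<noteq> {}}"

definition k_poly_hull :: "nat \<Rightarrow> (complex ^ 'n) set \<Rightarrow> (complex ^ 'n) set" where
  "k_poly_hull k X = (if k \<le> 1 then poly_hull X else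
     {z. z \<in> rat_hull (k - 1) X \<and>
         (\<forall>V m. m \<le> k - 1 \<and> pure_codim_subvariety V m \<and> z \<in> V \<longrightarrow> z \<in> poly_hull (X \<inter> V))})"

end

theory Submission
  imports Defs
begin

text \<open>Each hull is cut out by conditions of the form ``a certain closed set \<open>C\<close> meets \<open>X\<close>'':
  \<open>C\<close> is an analytic subvariety through \<open>z\<close> for the rational hull, and a superlevel set
  \<open>{x. \<bar>p z\<bar> \<le> \<bar>p x\<bar>}\<close> of a polynomial for the polynomial hull (which also enters the
  \<open>k\<close>-polynomial hull through \<open>K \<inter> V\<close>, again a chain of compacta).  By the finite intersection
  property, a closed set meeting every member of a chain of compacta meets its intersection, so
  these conditions pass to the limit; monotonicity of the hulls gives the other inclusion.\<close>

lemma compact_chain_Inter_meets_closed: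
  fixes KK :: "'a::heine_borel set set"
  assumes "KK \<noteq> {}" and compact: "\<forall>K\<in>KK. compact K"
    and chain: "\<forall>A\<in>KK. \<forall>B\<in>KK. A \<subseteq> B \<or> B \<subseteq> A"
    and "closed C" and meets: "\<forall>K\<in>KK. K \<inter> C \<noteq> {}"
  shows "\<Inter>KK \<inter> C \<noteq> {}"
proof -
  have "\<Inter>((\<lambda>K. K \<inter> C) ` KK) \<noteq> {}"
  proof (rule compact_fip_Heine_Borel)
    show "compact T" if "T \<in> (\<lambda>K. K \<inter> C) ` KK" for T
      using that compact \<open>closed C\<close> compact_Int_closed by blast
    show "\<Inter>F \<noteq> {}" if F: "finite F" "F \<subseteq> (\<lambda>K. K \<inter> C) ` KK" for F
    proof -
      obtain G where G: "G \<subseteq> KK" "finite G" "F = (\<lambda>K. K \<inter> C) ` G"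
        using finite_subset_image[OF F] by blast
      show ?thesis
      proof (cases "G = {}")
        case False
        have "subset.chain UNIV G"
          using G(1) chain by (auto simp: subset.chain_def)
        then have "\<Inter>G \<in> G"
          using Inter_in_chain G(2) False by blast
        then have "\<Inter>G \<inter> C \<noteq> {}" and "\<Inter>G \<inter> C \<subseteq> \<Inter>F"
          using G meets by auto
        then show ?thesis by blast
      qed (use G in auto)
    qed
  qed
  then show ?thesis
    using \<open>KK \<noteq> {}\<close> by auto
qed

lemma SUP_compact_less:
  fixes f :: "'a::topological_space \<Rightarrow> real"
  assumes "compact K" "continuous_on K f" "\<forall>x\<in>K. f x < c"
  shows "(SUP x\<in>K. ereal (f x)) < ereal c"
proof (cases "K = {}")
  case False
  then obtain x0 where "x0 \<in> K" "\<forall>y\<in>K. f y \<le> f x0"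
    using continuous_attains_sup[OF assms(1) _ assms(2)] by blast
  then have "(SUP x\<in>K. ereal (f x)) \<le> ereal (f x0)"
    by (auto intro!: SUP_least)
  also have "\<dots> < ereal c"
    using \<open>x0 \<in> K\<close> assms(3) by simp
  finally show ?thesis .
qed (simp add: bot_ereal_def)

lemma SUP_Inter_compact_chain_ge:
  fixes f :: "'a::heine_borel \<Rightarrow> real"
  assumes "KK \<noteq> {}" "\<forall>K\<in>KK. compact K" "\<forall>A\<in>KK. \<forall>B\<in>KK. A \<subseteq> B \<or> B \<subseteq> A"
    and cont: "continuous_on UNIV f"
    and ge: "\<forall>K\<in>KK. ereal c \<le> (SUP x\<in>K. ereal (f x))"
  shows "ereal c \<le> (SUP x\<in>\<Inter>KK. ereal (f x))"
proof (rule ccontr)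
  assume "\<not> ?thesis"
  then have less: "(SUP x\<in>\<Inter>KK. ereal (f x)) < ereal c"
    by simp
  define C where "C = {x. c \<le> f x}"
  have "closed C"
    unfolding C_def using cont by (intro closed_Collect_le) auto
  have "\<Inter>KK \<inter> C = {}"
  proof -
    have "f x < c" if "x \<in> \<Inter>KK" for x
      using le_less_trans[OF SUP_upper[OF that] less] by simp
    then show ?thesis
      unfolding C_def by force
  qed
  then obtain K where "K \<in> KK" "K \<inter> C = {}"
    using compact_chain_Inter_meets_closed[OF assms(1-3) \<open>closed C\<close>] by blast
  then have "(SUP x\<in>K. ereal (f x)) < ereal c"
    using assms(2) continuous_on_subset[OF cont]
    by (intro SUP_compact_less) (auto simp: C_def)
  with ge \<open>K \<in> KK\<close> show False
    by (meson not_le)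
qed

lemma pure_codim_subvariety_closed: "pure_codim_subvariety V m \<Longrightarrow> closed V"
  unfolding pure_codim_subvariety_def analytic_subvariety_def by blast

lemma continuous_on_poly_fun: "p \<in> poly_fun \<Longrightarrow> continuous_on UNIV p"
  by (induction rule: poly_fun.induct) (auto intro!: continuous_intros)

lemma poly_hull_mono: "A \<subseteq> B \<Longrightarrow> poly_hull A \<subseteq> poly_hull B"
  unfolding poly_hull_def by (auto intro: order_trans SUP_subset_mono)

lemma rat_hull_mono: "A \<subseteq> B \<Longrightarrow> rat_hull k A \<subseteq> rat_hull k B"
  unfolding rat_hull_def by blast

lemma k_poly_hull_mono:
  assumes "A \<subseteq> B"
  shows "k_poly_hull k A \<subseteq> k_poly_hull k B"
proof -
  have "poly_hull (A \<inter> V) \<subseteq> poly_hull (B \<inter> V)" for V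
    using assms by (intro poly_hull_mono) blast
  then show ?thesis
    using assms poly_hull_mono rat_hull_mono[of A B "k - 1"]
    unfolding k_poly_hull_def by (simp; blast)
qed

lemma subset_poly_hull: "X \<subseteq> poly_hull X"
  unfolding poly_hull_def by (auto intro: SUP_upper)

lemma subset_rat_hull: "X \<subseteq> rat_hull k X"
  unfolding rat_hull_def by blast

lemma subset_k_poly_hull: "X \<subseteq> k_poly_hull k X"
  using subset_poly_hull subset_rat_hull unfolding k_poly_hull_def by fastforce

lemma poly_hull_Inter_chain:
  fixes KK :: "(complex ^ 'n) set set"
  assumes "KK \<noteq> {}" "\<forall>K\<in>KK. compact K" "\<forall>A\<in>KK. \<forall>B\<in>KK. A \<subseteq> B \<or> B \<subseteq> A"
  shows "poly_hull (\<Inter>KK) = (\<Inter>K\<in>KK. poly_hull K)"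
proof
  show "poly_hull (\<Inter>KK) \<subseteq> (\<Inter>K\<in>KK. poly_hull K)"
    using poly_hull_mono by (metis INF_greatest Inter_lower)
  show "(\<Inter>K\<in>KK. poly_hull K) \<subseteq> poly_hull (\<Inter>KK)"
  proof
    fix z assume z: "z \<in> (\<Inter>K\<in>KK. poly_hull K)"
    show "z \<in> poly_hull (\<Inter>KK)"
      unfolding poly_hull_def
    proof (intro CollectI ballI)
      fix p :: "complex ^ 'n \<Rightarrow> complex" assume p: "p \<in> poly_fun"
      have "continuous_on UNIV (\<lambda>x. cmod (p x))"
        using continuous_on_poly_fun[OF p] by (intro continuous_intros)
      with z p show "ereal (cmod (p z)) \<le> (SUP x\<in>\<Inter>KK. ereal (cmod (p x)))"
        by (intro SUP_Inter_compact_chain_ge[OF assms]) (auto simp: poly_hull_def)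
    qed
  qed
qed

lemma poly_hull_Inter_chain_Int_closed:
  fixes KK :: "(complex ^ 'n) set set"
  assumes "KK \<noteq> {}" "\<forall>K\<in>KK. compact K" "\<forall>A\<in>KK. \<forall>B\<in>KK. A \<subseteq> B \<or> B \<subseteq> A"
    and "closed V"
  shows "poly_hull (\<Inter>KK \<inter> V) = (\<Inter>K\<in>KK. poly_hull (K \<inter> V))"
proof -
  have "\<Inter>KK \<inter> V = \<Inter>((\<lambda>K. K \<inter> V) ` KK)"
    using assms(1) by auto
  also have "poly_hull \<dots> = (\<Inter>K\<in>(\<lambda>K. K \<inter> V) ` KK. poly_hull K)"
  proof (rule poly_hull_Inter_chain)
    show "\<forall>K\<in>(\<lambda>K. K \<inter> V) ` KK. compact K"
      using assms(2,4) compact_Int_closed by blast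
    show "\<forall>A\<in>(\<lambda>K. K \<inter> V) ` KK. \<forall>B\<in>(\<lambda>K. K \<inter> V) ` KK. A \<subseteq> B \<or> B \<subseteq> A"
      using assms(3) by blast
  qed (use assms(1) in blast)
  finally show ?thesis
    by simp
qed

lemma rat_hull_Inter_chain:
  fixes KK :: "(complex ^ 'n) set set"
  assumes "KK \<noteq> {}" "\<forall>K\<in>KK. compact K" "\<forall>A\<in>KK. \<forall>B\<in>KK. A \<subseteq> B \<or> B \<subseteq> A"
  shows "rat_hull k (\<Inter>KK) = (\<Inter>K\<in>KK. rat_hull k K)"
proof
  show "rat_hull k (\<Inter>KK) \<subseteq> (\<Inter>K\<in>KK. rat_hull k K)"
    using rat_hull_mono by (metis INF_greatest Inter_lower)
  show "(\<Inter>K\<in>KK. rat_hull k K) \<subseteq> rat_hull k (\<Inter>KK)"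
  proof
    fix z assume z: "z \<in> (\<Inter>K\<in>KK. rat_hull k K)"
    show "z \<in> rat_hull k (\<Inter>KK)"
      unfolding rat_hull_def
    proof (intro CollectI allI impI)
      fix V m assume V: "m \<le> k \<and> pure_codim_subvariety V m \<and> z \<in> V"
      with z have "\<forall>K\<in>KK. K \<inter> V \<noteq> {}"
        by (auto simp: rat_hull_def Int_commute)
      with V show "V \<inter> \<Inter>KK \<noteq> {}"
        using compact_chain_Inter_meets_closed[OF assms] pure_codim_subvariety_closed
        by (metis Int_commute)
    qed
  qed
qed

lemma mem_k_poly_hull:
  "1 < k \<Longrightarrow> z \<in> k_poly_hull k X \<longleftrightarrow> z \<in> rat_hull (k - 1) X \<and>
     (\<forall>V m. m \<le> k - 1 \<and> pure_codim_subvariety V m \<and> z \<in> V \<longrightarrow> z \<in> poly_hull (X \<inter> V))"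
  unfolding k_poly_hull_def by simp

lemma k_poly_hull_Inter_chain:
  fixes KK :: "(complex ^ 'n) set set"
  assumes "KK \<noteq> {}" "\<forall>K\<in>KK. compact K" "\<forall>A\<in>KK. \<forall>B\<in>KK. A \<subseteq> B \<or> B \<subseteq> A"
  shows "k_poly_hull k (\<Inter>KK) = (\<Inter>K\<in>KK. k_poly_hull k K)"
proof (cases "k \<le> 1")
  case True
  then show ?thesis
    using poly_hull_Inter_chain[OF assms] by (simp add: k_poly_hull_def)
next
  case False
  then have "1 < k"
    by simp
  have poly_hull_slice: "z \<in> poly_hull (\<Inter>KK \<inter> V) \<longleftrightarrow> (\<forall>K\<in>KK. z \<in> poly_hull (K \<inter> V))"
    if "pure_codim_subvariety V m" for z V m
    using poly_hull_Inter_chain_Int_closed[OF assms pure_codim_subvariety_closed[OF that]] by blast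
  show ?thesis
  proof
    show "k_poly_hull k (\<Inter>KK) \<subseteq> (\<Inter>K\<in>KK. k_poly_hull k K)"
      using k_poly_hull_mono by (metis INF_greatest Inter_lower)
    show "(\<Inter>K\<in>KK. k_poly_hull k K) \<subseteq> k_poly_hull k (\<Inter>KK)"
    proof
      fix z assume z: "z \<in> (\<Inter>K\<in>KK. k_poly_hull k K)"
      have zK: "z \<in> rat_hull (k - 1) K \<and>
          (\<forall>V m. m \<le> k - 1 \<and> pure_codim_subvariety V m \<and> z \<in> V \<longrightarrow> z \<in> poly_hull (K \<inter> V))"
        if "K \<in> KK" for K
        using z that mem_k_poly_hull[OF \<open>1 < k\<close>, of z K] by blast
      have "z \<in> rat_hull (k - 1) (\<Inter>KK)"
        using zK rat_hull_Inter_chain[OF assms] by blast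
      moreover have "z \<in> poly_hull (\<Inter>KK \<inter> V)"
        if "m \<le> k - 1" "pure_codim_subvariety V m" "z \<in> V" for V m
        using zK that poly_hull_slice[OF that(2)] by blast
      ultimately show "z \<in> k_poly_hull k (\<Inter>KK)"
        unfolding mem_k_poly_hull[OF \<open>1 < k\<close>] by blast
    qed
  qed
qed

theorem lemma4p1:
  fixes KK :: "(complex ^ 'n) set set" and k :: nat
  assumes "1 \<le> k" and "k \<le> CARD('n)"
    and "\<forall>K\<in>KK. compact K"
    and "\<forall>A\<in>KK. \<forall>B\<in>KK. A \<subseteq> B \<or> B \<subseteq> A"
  shows "k_poly_hull k (\<Inter>KK) = (\<Inter>K\<in>KK. k_poly_hull k K)
       \<and> rat_hull k (\<Inter>KK) = (\<Inter>K\<in>KK. rat_hull k K)"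
proof (cases "KK = {}")
  case True
  then show ?thesis
    using subset_k_poly_hull[of UNIV k] subset_rat_hull[of UNIV k] by (simp add: top.extremum_unique)
next
  case False
  then show ?thesis
    using k_poly_hull_Inter_chain[OF False assms(3,4)] rat_hull_Inter_chain[OF False assms(3,4)]
    by simp
qed

end
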